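(* For even integers $k\ge 2$ define $$c_k = \frac{k}{2(k/2+1)(k/2-1)} + (-1)^{k/2}\frac{(k/2)!\,(k/2-2)!}{2(k-1)!}, \qquad d_k = \frac{(-1)^{k/2}(k-1)!}{2^{k+1}}$$ (with $c_k$ considered for $k\ge 4$). Then for every even $k\geq 4$ and every odd positive integer $j\leq k/2-2$: $$\nu_2\!\left(\frac{d_{k-2}}{2c_kd_k}\right)\geq 1,\qquad \nu_2\!\left(\frac{k\,d_{k/2}^2}{2c_kd_k}\right)\geq 0,$$ $$\nu_2\!\left(\left(\binom{k/2}{j}+\binom{k/2-2}{j}\right)\frac{d_{j+1}d_{k-j-1}}{c_kd_k}\right)\geq 0.$$
   Context: For a prime $p$ and nonzero rational $x=a/b$, $\nu_p(x)=\nu_p(a)-\nu_p(b)$ where $\nu_p(m)$ is the exponent of the highest power of $p$ dividing the integer $m$; $\nu_p(0)=\infty$. *)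

theory Defs
  imports Complex_Main "HOL-Library.Extended_Real" "HOL-Computational_Algebra.Primes"
begin

definition nu :: "int \<Rightarrow> rat \<Rightarrow> ereal" where
  "nu p x = (if x = 0 then \<infinity> else
     ereal (real_of_int (int (multiplicity p (fst (quotient_of x)))
                        - int (multiplicity p (snd (quotient_of x))))))"

definition c_seq :: "nat \<Rightarrow> rat" where
  "c_seq k = of_nat k / (2 * (of_nat (k div 2) + 1) * (of_nat (k div 2) - 1))
     + (-1) ^ (k div 2) * (fact (k div 2) * fact (k div 2 - 2)) / (2 * fact (k - 1))"

definition d_seq :: "nat \<Rightarrow> rat" where
  "d_seq k = (-1) ^ (k div 2) * fact (k - 1) / 2 ^ (k + 1)"

end

theory Submission
  imports Defs
begin

(* Write k = 2m and F(n) = nu_2(n!). The valuations of the d_n are explicit, so the three claims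
   reduce to upper bounds for nu_2(c_k). Split c_k = A + B with A = m/((m+1)(m-1)) and
   B = (-1)^m m!(m-2)!/(2(2m-1)!). Since F(n) <= n - 2 unless n is a power of two, if m + 1 is not
   a power of two then nu_2(B) = F(m) - m - nu_2(m-1) < nu_2(A), so nu_2(c_k) = nu_2(B) and the
   bounds follow from F(a) + F(b) <= F(a + b).
   If m + 1 = 2^e the two leading terms cancel. Writing c_k = (mK - (2m+1))/((m+1)(m-1)K) with
   K = C(2m+1, m), the congruence C(2^a - 1, r) = (-1)^r (mod 4) for r < 2^(a-1) gives K = -1 (mod 4),
   so the numerator is 2 (mod 4) and nu_2(c_k) = -e; the same congruence makes C(2m+1, j) odd,
   which controls the binomial terms. *)

definition padic_val :: "int \<Rightarrow> rat \<Rightarrow> int" where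
  "padic_val p x = int (multiplicity p (fst (quotient_of x))) - int (multiplicity p (snd (quotient_of x)))"

lemma nu_eq_padic_val: "x \<noteq> 0 \<Longrightarrow> nu p x = ereal (of_int (padic_val p x))"
  unfolding nu_def padic_val_def by simp

lemma nu_ge_of_padic_val_ge: "x \<noteq> 0 \<Longrightarrow> r \<le> padic_val p x \<Longrightarrow> ereal (of_int r) \<le> nu p x"
  by (simp add: nu_eq_padic_val)

lemma rat_as_int_fraction:
  fixes x :: rat
  obtains a b where "x = of_int a / of_int b" "b \<noteq> 0" "x \<noteq> 0 \<Longrightarrow> a \<noteq> 0"
proof -
  obtain a b where ab: "quotient_of x = (a, b)" by (cases "quotient_of x")
  show ?thesis
    using that[of a b] quotient_of_div[OF ab] quotient_of_denom_pos[OF ab] by auto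
qed

context
  fixes p :: int
  assumes p: "prime_elem p"
begin

lemma padic_val_of_int_div:
  assumes "a \<noteq> 0" "b \<noteq> 0"
  shows "padic_val p (of_int a / of_int b) = int (multiplicity p a) - int (multiplicity p b)"
proof -
  obtain a' b' where ab': "quotient_of (of_int a / of_int b) = (a', b')"
    by (cases "quotient_of (of_int a / of_int b)")
  have "b' > 0" using quotient_of_denom_pos[OF ab'] .
  moreover have "(of_int a / of_int b :: rat) = of_int a' / of_int b'"
    using quotient_of_div[OF ab'] .
  ultimately have "of_int (a * b') = (of_int (a' * b) :: rat)"
    using assms by (simp add: field_simps)
  hence cross: "a * b' = a' * b" by (simp only: of_int_eq_iff)
  with assms \<open>b' > 0\<close> have "a' \<noteq> 0" by auto
  have "multiplicity p (a * b') = multiplicity p (a' * b)" using cross by simp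
  with assms \<open>b' > 0\<close> \<open>a' \<noteq> 0\<close>
  have "multiplicity p a + multiplicity p b' = multiplicity p a' + multiplicity p b"
    using p by (simp add: prime_elem_multiplicity_mult_distrib)
  thus ?thesis unfolding padic_val_def ab' by simp
qed

lemma padic_val_of_int: "a \<noteq> 0 \<Longrightarrow> padic_val p (of_int a) = int (multiplicity p a)"
  using padic_val_of_int_div[of a 1] by simp

lemma padic_val_of_nat: "n \<noteq> 0 \<Longrightarrow> padic_val p (of_nat n) = int (multiplicity p (int n))"
  using padic_val_of_int[of "int n"] by simp

lemma padic_val_self: "padic_val p (of_int p) = 1"
  using padic_val_of_int[of p] multiplicity_prime[OF p] p[THEN prime_elem_not_zeroI] by simp

lemma padic_val_mult:
  assumes "x \<noteq> 0" "y \<noteq> 0"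
  shows "padic_val p (x * y) = padic_val p x + padic_val p y"
proof -
  obtain a b where x: "x = of_int a / of_int b" "b \<noteq> 0" "a \<noteq> 0"
    using rat_as_int_fraction assms(1) by metis
  obtain c d where y: "y = of_int c / of_int d" "d \<noteq> 0" "c \<noteq> 0"
    using rat_as_int_fraction assms(2) by metis
  have "padic_val p (x * y) = padic_val p (of_int (a * c) / of_int (b * d))"
    using x y by simp
  also have "\<dots> = int (multiplicity p (a * c)) - int (multiplicity p (b * d))"
    using x y by (intro padic_val_of_int_div) simp_all
  finally show ?thesis
    using x y p by (simp add: padic_val_of_int_div prime_elem_multiplicity_mult_distrib)
qed

lemma padic_val_inverse: "padic_val p (inverse x) = - padic_val p x"
proof (cases "x = 0")
  case False
  then obtain a b where x: "x = of_int a / of_int b" "b \<noteq> 0" "a \<noteq> 0"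
    using rat_as_int_fraction by metis
  have "inverse x = of_int b / of_int a" using x by simp
  thus ?thesis using x by (simp add: padic_val_of_int_div)
qed (simp add: padic_val_def)

lemma padic_val_divide:
  "x \<noteq> 0 \<Longrightarrow> y \<noteq> 0 \<Longrightarrow> padic_val p (x / y) = padic_val p x - padic_val p y"
  by (simp add: divide_inverse padic_val_mult padic_val_inverse)

lemma padic_val_power: "x \<noteq> 0 \<Longrightarrow> padic_val p (x ^ n) = int n * padic_val p x"
  by (induction n) (simp_all add: padic_val_mult algebra_simps, simp add: padic_val_def)

lemma padic_val_uminus: "padic_val p (- x) = padic_val p x"
proof (cases "x = 0")
  case False
  have "padic_val p (of_int (-1)) = 0"
    by (subst padic_val_of_int) (auto simp: multiplicity_unit_right)
  hence "padic_val p (of_int (-1) * x) = padic_val p x"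
    using False by (subst padic_val_mult) simp_all
  thus ?thesis by simp
qed simp

lemma padic_val_neg_one_power_mult: "padic_val p ((-1) ^ n * x) = padic_val p x"
  by (cases "even n") (simp_all add: padic_val_uminus)

lemma padic_val_add_ge:
  assumes "x \<noteq> 0" "y \<noteq> 0" "x + y \<noteq> 0"
  shows "min (padic_val p x) (padic_val p y) \<le> padic_val p (x + y)"
proof -
  obtain a b where x: "x = of_int a / of_int b" "b \<noteq> 0" "a \<noteq> 0"
    using rat_as_int_fraction assms(1) by metis
  obtain c d where y: "y = of_int c / of_int d" "d \<noteq> 0" "c \<noteq> 0"
    using rat_as_int_fraction assms(2) by metis
  define s where "s = a * d + c * b"
  have sum: "x + y = of_int s / of_int (b * d)" using x y by (simp add: s_def field_simps)
  with assms(3) have "s \<noteq> 0" by auto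
  define k where "k = min (multiplicity p (a * d)) (multiplicity p (c * b))"
  have "p ^ k dvd a * d" "p ^ k dvd c * b"
    by (rule multiplicity_dvd'; simp add: k_def)+
  hence "p ^ k dvd s" unfolding s_def by simp
  hence "k \<le> multiplicity p s" using \<open>s \<noteq> 0\<close> p
    by (intro multiplicity_geI) (auto simp: prime_elem_not_unit)
  moreover have "padic_val p (x + y) = int (multiplicity p s) - int (multiplicity p (b * d))"
    unfolding sum using x y \<open>s \<noteq> 0\<close> by (intro padic_val_of_int_div) simp_all
  ultimately show ?thesis using x y p
    by (simp add: k_def padic_val_of_int_div prime_elem_multiplicity_mult_distrib)
qed

lemma padic_val_add_eq_left:
  assumes "x \<noteq> 0" "y \<noteq> 0" "padic_val p x < padic_val p y"
  shows "x + y \<noteq> 0" "padic_val p (x + y) = padic_val p x"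
proof -
  show "x + y \<noteq> 0"
    using assms padic_val_uminus[of x] by (metis add_eq_0_iff less_irrefl)
  moreover have "x = (x + y) + (- y)" by simp
  ultimately have "min (padic_val p (x + y)) (padic_val p y) \<le> padic_val p x"
    using padic_val_add_ge[of "x + y" "- y"] assms padic_val_uminus[of y] by simp
  thus "padic_val p (x + y) = padic_val p x"
    using padic_val_add_ge[of x y] assms \<open>x + y \<noteq> 0\<close> by linarith
qed

end

abbreviation v2 :: "rat \<Rightarrow> int" where
  "v2 \<equiv> padic_val 2"

lemma prime_elem_int_two: "prime_elem (2::int)"
  by simp

lemmas v2_mult = padic_val_mult[OF prime_elem_int_two]
  and v2_divide = padic_val_divide[OF prime_elem_int_two]
  and v2_power = padic_val_power[OF prime_elem_int_two]
  and v2_of_nat = padic_val_of_nat[OF prime_elem_int_two]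
  and v2_neg_one_power_mult = padic_val_neg_one_power_mult[OF prime_elem_int_two]
  and v2_add_ge = padic_val_add_ge[OF prime_elem_int_two]
  and v2_add_eq_left = padic_val_add_eq_left[OF prime_elem_int_two]

lemma v2_two_power: "v2 (2 ^ e) = int e"
  using v2_power[of 2 e] padic_val_self[OF prime_elem_int_two] by simp

lemma v2_of_nat_nonneg: "0 \<le> v2 (of_nat n)"
  by (cases "n = 0") (simp_all add: v2_of_nat padic_val_def)

lemma v2_of_nat_ge_iff: "n \<noteq> 0 \<Longrightarrow> int e \<le> v2 (of_nat n) \<longleftrightarrow> 2 ^ e dvd n"
  using power_dvd_iff_le_multiplicity[of "int n" 2 e] prime_elem_int_two
  by (simp add: v2_of_nat prime_elem_not_unit) (metis int_dvd_int_iff of_nat_numeral of_nat_power)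

lemma v2_of_int_odd: "odd z \<Longrightarrow> v2 (of_int z) = 0"
  using padic_val_of_int[OF prime_elem_int_two, of z] by (auto simp: not_dvd_imp_multiplicity_0)

lemma v2_odd: "odd n \<Longrightarrow> v2 (of_nat n) = 0"
  using v2_of_int_odd[of "int n"] by simp

lemma v2_double: "n \<noteq> 0 \<Longrightarrow> v2 (of_nat (2 * n)) = 1 + v2 (of_nat n)"
  using v2_mult[of 2 "of_nat n"] v2_two_power[of 1] by simp

lemma v2_fact_Suc: "v2 (fact (Suc n)) = v2 (fact n) + v2 (of_nat (Suc n))"
proof -
  have "v2 (fact (Suc n)) = v2 (of_nat (Suc n) * fact n)"
    by (simp only: fact_Suc)
  also have "\<dots> = v2 (of_nat (Suc n)) + v2 (fact n)"
    by (rule v2_mult) simp_all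
  finally show ?thesis by linarith
qed

lemma v2_fact_double: "v2 (fact (2 * n)) = int n + v2 (fact n)"
proof (induction n)
  case (Suc n)
  have two_Suc: "2 * Suc n = Suc (Suc (2 * n))" by simp
  have "v2 (fact (2 * Suc n)) = v2 (fact (2 * n)) + v2 (of_nat (Suc (2 * n))) + v2 (of_nat (2 * Suc n))"
    unfolding two_Suc using v2_fact_Suc[of "Suc (2 * n)"] v2_fact_Suc[of "2 * n"] by linarith
  also have "\<dots> = v2 (fact (2 * n)) + 1 + v2 (of_nat (Suc n))"
    using v2_odd[of "Suc (2 * n)"] v2_double[of "Suc n"] by simp
  finally show ?case using Suc v2_fact_Suc[of n] by simp
qed (simp add: padic_val_def)

lemma v2_fact_odd: "v2 (fact (2 * n + 1)) = int n + v2 (fact n)"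
  using v2_fact_Suc[of "2 * n"] v2_fact_double[of n] v2_odd[of "2 * n + 1"] by simp

lemma v2_fact_less: "0 < n \<Longrightarrow> v2 (fact n) < int n"
proof (induction n rule: less_induct)
  case (less n)
  show ?case
  proof (cases "even n")
    case True
    then obtain q where "n = 2 * q" "0 < q" "q < n" using less.prems by auto
    thus ?thesis using less.IH[of q] v2_fact_double[of q] by simp
  next
    case False
    then obtain q where q: "n = 2 * q + 1" by (blast elim: oddE)
    show ?thesis
    proof (cases "q = 0")
      case False
      thus ?thesis using q less.IH[of q] v2_fact_odd[of q] by simp
    qed (simp add: q padic_val_def)
  qed
qed

lemma v2_fact_two_power: "v2 (fact (2 ^ e)) = 2 ^ e - 1"
proof (induction e)
  case (Suc e)
  then show ?case using v2_fact_double[of "2 ^ e"] by simp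
qed (simp add: padic_val_def)

lemma v2_fact_le_minus_two:
  assumes "0 < n" "\<nexists>e. n = 2 ^ e"
  shows "v2 (fact n) \<le> int n - 2"
  using assms
proof (induction n rule: less_induct)
  case (less n)
  show ?case
  proof (cases "even n")
    case True
    then obtain q where q: "n = 2 * q" "0 < q" "q < n" using less.prems by auto
    have "\<nexists>e. q = 2 ^ e" using less.prems(2) q(1) by (metis power_Suc)
    thus ?thesis using q less.IH[of q] v2_fact_double[of q] by simp
  next
    case False
    then obtain q where q: "n = 2 * q + 1" by (blast elim: oddE)
    have "q \<noteq> 0" using less.prems(2) q by (metis add_0 mult_0_right power_0)
    thus ?thesis using q v2_fact_less[of q] v2_fact_odd[of q] by simp
  qed
qed

lemma v2_binomial:
  assumes "k \<le> n"
  shows "v2 (of_nat (n choose k)) = v2 (fact n) - v2 (fact k) - v2 (fact (n - k))"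
proof -
  have "(fact n :: rat) = fact k * fact (n - k) * of_nat (n choose k)"
    using binomial_fact_lemma[OF assms] by (metis of_nat_fact of_nat_mult)
  hence "v2 (fact n) = v2 (fact k) + v2 (fact (n - k)) + v2 (of_nat (n choose k))"
    using assms by (simp add: v2_mult)
  thus ?thesis by simp
qed

lemma v2_fact_add_le: "v2 (fact a) + v2 (fact b) \<le> v2 (fact (a + b))"
  using v2_binomial[of a "a + b"] v2_of_nat_nonneg[of "a + b choose a"] by simp

lemma v2_fact_pred: "0 < n \<Longrightarrow> v2 (fact n) = v2 (fact (n - 1)) + v2 (of_nat n)"
  using v2_fact_Suc[of "n - 1"] by simp

lemma v2_fact_diff_two:
  "2 \<le> n \<Longrightarrow> v2 (fact n) = v2 (fact (n - 2)) + v2 (of_nat (n - 1)) + v2 (of_nat n)"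
  using v2_fact_pred[of n] v2_fact_pred[of "n - 1"] by (simp add: numeral_2_eq_2)

lemma v2_fact_double_pred: "0 < m \<Longrightarrow> v2 (fact (2 * m - 1)) = int m + v2 (fact m) - 1 - v2 (of_nat m)"
  using v2_fact_pred[of "2 * m"] v2_fact_double[of m] v2_double[of m] by simp

lemma v2_two_mod_four: "n mod 4 = 2 \<Longrightarrow> v2 (of_nat n) = 1"
proof -
  assume "n mod 4 = 2"
  hence "n = 2 * (2 * (n div 4) + 1)" by presburger
  thus ?thesis using v2_double[of "2 * (n div 4) + 1"] v2_odd[of "2 * (n div 4) + 1"] by simp
qed

lemma v2_between_two_powers: "2 ^ e < n \<Longrightarrow> n < 2 ^ (e + 1) \<Longrightarrow> v2 (of_nat n) < int e"
proof -
  assume bounds: "2 ^ e < n" "n < 2 ^ (e + 1)"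
  have "\<not> 2 ^ e dvd n"
  proof
    assume "2 ^ e dvd n"
    then obtain r where "n = 2 ^ e * r" ..
    with bounds have "1 < r" "r < 2" by auto
    thus False by simp
  qed
  thus ?thesis using v2_of_nat_ge_iff[of n e] bounds by auto
qed

lemma v2_binomial_sum_ge:
  assumes "j \<le> a" "j \<le> b"
  shows "v2 (fact a) + v2 (fact b) - v2 (fact j) - v2 (fact (a + b - j))
           \<le> v2 (of_nat ((a choose j) + (b choose j)))"
proof -
  have "0 < a choose j" "0 < b choose j" using assms by simp_all
  hence "min (v2 (of_nat (a choose j))) (v2 (of_nat (b choose j)))
           \<le> v2 (of_nat ((a choose j) + (b choose j)))"
    using v2_add_ge[of "of_nat (a choose j)" "of_nat (b choose j)"] by (simp flip: of_nat_add)
  moreover have "a - j + b = a + b - j" "a + (b - j) = a + b - j" using assms by simp_all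
  ultimately show ?thesis
    using v2_binomial[OF assms(1)] v2_binomial[OF assms(2)]
      v2_fact_add_le[of "a - j" b] v2_fact_add_le[of a "b - j"] by (simp add: min_le_iff_disj, linarith)
qed

lemma binomial_mersenne_mod_4:
  "r < 2 ^ (a - 1) \<Longrightarrow> 4 dvd int ((2 ^ a - 1) choose r) - (-1) ^ r"
proof (induction r)
  case (Suc r)
  define P where "P = int ((2 ^ a - 1) choose r)"
  define P' where "P' = int ((2 ^ a - 1) choose Suc r)"
  have "a \<noteq> 0" using Suc.prems by (cases a) auto
  hence "(2::nat) ^ a = 2 * 2 ^ (a - 1)" by (metis power_eq_if)
  hence "r < 2 ^ a - 1" using Suc.prems by linarith
  hence "int (Suc r * ((2 ^ a - 1) choose Suc r)) = int ((2 ^ a - 1 - r) * ((2 ^ a - 1) choose r))"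
    by (simp only: binomial_absorption binomial_absorb_comp)
  moreover have "int (2 ^ a - 1 - r) = 2 ^ a - int (Suc r)"
    using \<open>r < 2 ^ a - 1\<close> by (simp add: of_nat_diff)
  ultimately have recur: "int (Suc r) * P' = (2 ^ a - int (Suc r)) * P"
    unfolding P_def P'_def by (simp only: of_nat_mult)
  define f where "f = multiplicity 2 (int (Suc r))"
  obtain u where u: "int (Suc r) = 2 ^ f * u" "\<not> 2 dvd u"
    unfolding f_def using multiplicity_decompose'[of "int (Suc r)" 2] by auto
  have "(2::int) ^ f \<le> int (Suc r)"
    using u by (intro zdvd_imp_le) simp_all
  also have "\<dots> < 2 ^ (a - 1)"
    using Suc.prems by (metis of_nat_less_iff of_nat_numeral of_nat_power)
  finally have "f < a - 1" by (simp add: power_strict_increasing_iff)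
  hence "a = f + 2 + (a - f - 2)" by simp
  then obtain g where g: "a = f + 2 + g" by blast
  have "2 ^ f * (u * P') = 2 ^ f * ((4 * 2 ^ g - u) * P)"
    using recur unfolding u(1) g by (simp add: power_add algebra_simps)
  hence "u * P' = (4 * 2 ^ g - u) * P"
    by (simp only: mult_cancel_left power_eq_0_iff) simp
  hence "u * (P' + P) = 4 * (2 ^ g * P)"
    by (simp add: algebra_simps)
  moreover have "coprime 4 u"
    using u(2) coprime_power_left_iff[of 2 2 u] by simp
  ultimately have "4 dvd P' + P"
    by (metis coprime_dvd_mult_right_iff dvd_triv_left)
  moreover have "4 dvd P - (-1) ^ r"
    using Suc unfolding P_def by simp
  ultimately have "4 dvd (P' + P) - (P - (-1) ^ r)"
    by (rule dvd_diff)
  thus ?case unfolding P'_def by simp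
qed simp

lemma mersenne_exponent_ge_two:
  fixes m e :: nat
  assumes "m + 1 = 2 ^ e" "2 \<le> m"
  shows "2 \<le> e"
proof (rule ccontr)
  assume "\<not> 2 \<le> e"
  hence "(2::nat) ^ e \<le> 2 ^ 1" by (intro power_increasing) auto
  thus False using assms by simp
qed

lemma mersenne_mod_fourE:
  fixes m e :: nat
  assumes "m + 1 = 2 ^ e" "2 \<le> m"
  obtains w where "m = 4 * w + 3"
proof -
  have "m + 1 = 4 * 2 ^ (e - 2)"
    using assms(1) mersenne_exponent_ge_two[OF assms]
    by (metis le_add_diff_inverse power_add power2_eq_square numeral_Bit0 mult_2)
  then obtain x where "m + 1 = 4 * x" ..
  hence "\<exists>w. m = 4 * w + 3" by presburger
  thus ?thesis using that by blast
qed

lemma binomial_mersenne_odd_mod_4: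
  assumes "m + 1 = 2 ^ e" "odd j" "j \<le> m"
  shows "4 dvd int (2 * m + 1 choose j) + 1"
proof -
  have "2 ^ (e + 1) - 1 = 2 * m + 1" "j < 2 ^ (e + 1 - 1)"
    using assms(1,3) by simp_all
  thus ?thesis
    using binomial_mersenne_mod_4[of j "e + 1"] assms(2) by simp
qed

lemma v2_fact_mersenne: "m + 1 = 2 ^ e \<Longrightarrow> v2 (fact m) = int m - int e"
  using v2_fact_two_power[of e] v2_fact_Suc[of m] v2_two_power[of e]
  by (metis Suc_eq_plus1 add_diff_cancel_right' of_nat_numeral of_nat_power of_nat_Suc
      diff_diff_eq2 of_nat_1 add.commute)

lemma v2_binomial_sum_mersenne:
  assumes "m + 1 = 2 ^ e" "2 \<le> m" "odd j" "j \<le> m - 2"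
  shows "2 * int m \<le> v2 (of_nat ((m choose j) + ((m - 2) choose j)))
                      + v2 (fact j) + v2 (fact (2 * m - j - 2)) + 2 * int e"
proof -
  have "2 \<le> e" by (rule mersenne_exponent_ge_two[OF assms(1,2)])
  obtain w where m: "m = 4 * w + 3" by (rule mersenne_mod_fourE[OF assms(1,2)])
  define S where "S = (m choose j) + ((m - 2) choose j)"
  have "4 dvd int (2 * m + 1 choose j) + 1"
    using binomial_mersenne_odd_mod_4[OF assms(1,3)] assms(4) by simp
  hence "odd (2 * m + 1 choose j)" by presburger
  hence "v2 (fact j) + v2 (fact (2 * m + 1 - j)) = v2 (fact (2 * m + 1))"
    using v2_binomial[of j "2 * m + 1"] v2_odd assms(4) by force
  also have "\<dots> = 2 * int m - int e"
    using v2_fact_odd[of m] v2_fact_mersenne[OF assms(1)] by simp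
  finally have sum_fact: "v2 (fact j) + v2 (fact (2 * m + 1 - j)) = 2 * int m - int e" .
  define z where "z = 2 * m - 1 - j"
  have z: "2 * m + 1 - j = z + 2" "2 * m - j - 2 = z - 1" "2 ^ e \<le> z" "0 < z" "even z"
    using assms unfolding z_def by auto
  have "v2 (fact (z + 2)) = v2 (fact (z - 1)) + v2 (of_nat z) + v2 (of_nat (z + 1)) + v2 (of_nat (z + 2))"
    using v2_fact_Suc[of "z + 1"] v2_fact_Suc[of z] v2_fact_pred[of z] z(4) by simp
  \<comment> \<open>As C(2m+1, j) is odd, everything reduces to the even neighbours z and z + 2 of 2m - j.\<close>
  hence reduced: "v2 (of_nat z) + v2 (of_nat (z + 2)) \<le> v2 (of_nat S) + int e \<Longrightarrow> ?thesis"
    using sum_fact v2_odd[of "z + 1"] z(1,2,5) unfolding S_def by simp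
  show ?thesis
  proof (cases "j = m - 2")
    case True
    have "z = 2 ^ e" using True assms(1,2) unfolding z_def by simp
    moreover have "(2::nat) ^ 2 dvd 2 ^ e" using \<open>2 \<le> e\<close> by (rule le_imp_power_dvd)
    ultimately have "4 dvd z" by simp
    hence "v2 (of_nat (z + 2)) = 1" by (intro v2_two_mod_four) presburger
    have "v2 (of_nat z) = int e" using \<open>z = 2 ^ e\<close> v2_two_power[of e] by simp
    have "m * (m - 1) = 2 * ((4 * w + 3) * (2 * w + 1))" unfolding m by (simp add: algebra_simps)
    hence "odd (m choose 2)" by (simp add: choose_two)
    moreover have "m choose j = m choose 2"
      using True binomial_symmetric[of 2 m] assms(2) by simp
    ultimately have "2 ^ 1 dvd S" unfolding S_def using True by simp
    moreover have "S \<noteq> 0" unfolding S_def using assms(4) by simp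
    ultimately have "1 \<le> v2 (of_nat S)" using v2_of_nat_ge_iff[of S 1] by simp
    show ?thesis by (rule reduced) (use \<open>v2 (of_nat z) = int e\<close> \<open>v2 (of_nat (z + 2)) = 1\<close> \<open>1 \<le> v2 (of_nat S)\<close> in simp)
  next
    case False
    hence "j + 4 \<le> m" using assms(3,4) m by presburger
    hence bounds: "2 ^ e < z" "z + 2 < 2 ^ (e + 1)" using assms(1) unfolding z_def by simp_all
    have "v2 (of_nat z) + v2 (of_nat (z + 2)) \<le> 1 + (int e - 1)"
    proof (cases "4 dvd z")
      case True
      hence "v2 (of_nat (z + 2)) = 1" by (intro v2_two_mod_four) presburger
      moreover have "v2 (of_nat z) < int e" using bounds by (intro v2_between_two_powers) simp_all
      ultimately show ?thesis by simp
    next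
      case False
      hence "v2 (of_nat z) = 1" using \<open>even z\<close> by (intro v2_two_mod_four) presburger
      moreover have "v2 (of_nat (z + 2)) < int e" using bounds by (intro v2_between_two_powers) simp_all
      ultimately show ?thesis by simp
    qed
    thus ?thesis using v2_of_nat_nonneg[of S] by (intro reduced) simp
  qed
qed

lemma v2_d_seq: "d_seq n \<noteq> 0" "v2 (d_seq n) = v2 (fact (n - 1)) - int (n + 1)"
proof -
  show "d_seq n \<noteq> 0" by (simp add: d_seq_def)
  have "v2 (d_seq n) = v2 ((-1) ^ (n div 2) * fact (n - 1)) - v2 (2 ^ (n + 1))"
    unfolding d_seq_def by (rule v2_divide) simp_all
  thus "v2 (d_seq n) = v2 (fact (n - 1)) - int (n + 1)"
    by (simp only: v2_neg_one_power_mult v2_two_power)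
qed

lemma c_seq_double:
  "c_seq (2 * m) = of_nat (2 * m) / (2 * (of_nat m + 1) * (of_nat m - 1))
     + (-1) ^ m * (fact m * fact (m - 2)) / (2 * fact (2 * m - 1))"
proof -
  have "2 * m div 2 = m" by simp
  thus ?thesis unfolding c_seq_def by (simp only:)
qed

lemma fact_binomial_central_identity:
  assumes "2 \<le> m"
  shows "fact m * fact (m - 2) * ((of_nat m + 1) * (of_nat m - 1) * of_nat (2 * m + 1 choose m))
       = 2 * (2 * of_nat m + 1) * (fact (2 * m - 1) :: rat)"
proof -
  from le_Suc_ex[OF assms] obtain q where m: "m = 2 + q" by blast
  have "fact m * fact (m + 1) * (2 * m + 1 choose m) = (fact (2 * m + 1) :: nat)"
    using binomial_fact_lemma[of m "2 * m + 1"] by simp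
  hence "of_nat (fact m * fact (m + 1) * (2 * m + 1 choose m)) = (of_nat (fact (2 * m + 1)) :: rat)"
    by (rule arg_cong)
  hence "fact m * fact (m + 1) * of_nat (2 * m + 1 choose m) = (fact (2 * m + 1) :: rat)"
    by (simp only: of_nat_mult of_nat_fact)
  hence "of_nat m * (fact m * fact (m - 2) * ((of_nat m + 1) * (of_nat m - 1) * of_nat (2 * m + 1 choose m)))
       = of_nat m * (2 * (2 * of_nat m + 1) * (fact (2 * m - 1) :: rat))"
    unfolding m by (simp add: fact_Suc numeral_eq_Suc algebra_simps)
  thus ?thesis using assms by simp
qed

lemma c_seq_closed_form:
  assumes "2 \<le> m"
  shows "c_seq (2 * m) = (of_nat m * of_nat (2 * m + 1 choose m) + (-1) ^ m * (2 * of_nat m + 1))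
           / ((of_nat m + 1) * (of_nat m - 1) * of_nat (2 * m + 1 choose m))"
proof -
  define x :: rat where "x = of_nat m"
  define K :: rat where "K = of_nat (2 * m + 1 choose m)"
  define F :: rat where "F = fact m * fact (m - 2)"
  define G :: rat where "G = fact (2 * m - 1)"
  define s :: rat where "s = (-1) ^ m"
  have nonzero: "K \<noteq> 0" "x + 1 \<noteq> 0" "x - 1 \<noteq> 0" "G \<noteq> 0"
    using assms by (simp_all add: K_def x_def G_def)
  have "F * ((x + 1) * (x - 1) * K) = 2 * (2 * x + 1) * G"
    using fact_binomial_central_identity[OF assms] unfolding F_def G_def K_def x_def .
  hence "s * F / (2 * G) = s * (2 * x + 1) / ((x + 1) * (x - 1) * K)"
    using nonzero by (simp add: frac_eq_eq mult.commute)
  moreover have "2 * x / (2 * (x + 1) * (x - 1)) = x / ((x + 1) * (x - 1))"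
    by (subst mult.assoc) (rule mult_divide_mult_cancel_left, simp)
  ultimately have "c_seq (2 * m) = x / ((x + 1) * (x - 1)) + s * (2 * x + 1) / ((x + 1) * (x - 1) * K)"
    unfolding c_seq_double F_def G_def s_def x_def by simp
  also have "\<dots> = (x * K + s * (2 * x + 1)) / ((x + 1) * (x - 1) * K)"
    using nonzero by (simp add: divide_simps)
  finally show ?thesis unfolding x_def K_def s_def .
qed

lemma v2_c_seq_generic:
  assumes "2 \<le> m" "\<nexists>e. m + 1 = 2 ^ e"
  shows "c_seq (2 * m) \<noteq> 0" "v2 (c_seq (2 * m)) = v2 (fact m) - int m - v2 (of_nat (m - 1))"
proof -
  define A :: rat where "A = of_nat (2 * m) / (2 * (of_nat m + 1) * (of_nat m - 1))"
  define B :: rat where "B = (-1) ^ m * (fact m * fact (m - 2)) / (2 * fact (2 * m - 1))"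
  have A_eq: "A = of_nat (2 * m) / (2 * of_nat (m + 1) * of_nat (m - 1))"
    using assms by (simp add: A_def of_nat_diff)
  have "A \<noteq> 0" "B \<noteq> 0" using assms by (simp_all add: A_eq B_def)
  have "v2 A = v2 (of_nat (2 * m)) - v2 (2 * of_nat (m + 1) * of_nat (m - 1))"
    unfolding A_eq by (rule v2_divide) (use assms in simp_all)
  also have "v2 (2 * of_nat (m + 1) * of_nat (m - 1)) = v2 (2 * of_nat (m + 1)) + v2 (of_nat (m - 1))"
    by (rule v2_mult) (use assms in simp_all)
  also have "v2 (2 * of_nat (m + 1)) = v2 2 + v2 (of_nat (m + 1))"
    by (rule v2_mult) simp_all
  finally have vA: "v2 A = v2 (of_nat m) - v2 (of_nat (m + 1)) - v2 (of_nat (m - 1))"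
    using v2_double[of m] v2_two_power[of 1] assms by simp
  have "v2 B = v2 (fact m) + v2 (fact (m - 2)) - (v2 2 + v2 (fact (2 * m - 1)))"
    unfolding B_def by (simp add: v2_divide v2_mult v2_neg_one_power_mult)
  hence vB: "v2 B = v2 (fact m) - int m - v2 (of_nat (m - 1))"
    using v2_fact_double_pred[of m] v2_fact_diff_two[OF assms(1)] v2_two_power[of 1] assms(1) by simp
  have "v2 (fact (m + 1)) \<le> int (m + 1) - 2"
    using assms(2) by (intro v2_fact_le_minus_two) auto
  hence "v2 B < v2 A"
    using vA vB v2_fact_Suc[of m] v2_of_nat_nonneg[of m] by simp
  hence "B + A \<noteq> 0" "v2 (B + A) = v2 B"
    using v2_add_eq_left \<open>A \<noteq> 0\<close> \<open>B \<noteq> 0\<close> by blast+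
  moreover have "c_seq (2 * m) = B + A"
    unfolding c_seq_double A_def B_def by simp
  ultimately show "c_seq (2 * m) \<noteq> 0" "v2 (c_seq (2 * m)) = v2 (fact m) - int m - v2 (of_nat (m - 1))"
    using vB by simp_all
qed

lemma v2_c_seq_mersenne:
  assumes "m + 1 = 2 ^ e" "2 \<le> m"
  shows "c_seq (2 * m) \<noteq> 0" "v2 (c_seq (2 * m)) = - int e"
proof -
  obtain w where m: "m = 4 * w + 3" by (rule mersenne_mod_fourE[OF assms])
  define K where "K = 2 * m + 1 choose m"
  have "4 dvd int K + 1"
    unfolding K_def using m by (intro binomial_mersenne_odd_mod_4[OF assms(1)]) simp_all
  then obtain t where "int K + 1 = 4 * t" ..
  hence K: "int K = 4 * t - 1" by simp
  define z where "z = 8 * int w * t - 6 * int w + 6 * t - 5"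
  have "int m * int K - (2 * int m + 1) = 2 * z"
    unfolding K m z_def by (simp add: algebra_simps)
  hence "of_int (int m * int K - (2 * int m + 1)) = (of_int (2 * z) :: rat)" by simp
  hence num: "of_nat m * of_nat K + (-1) ^ m * (2 * of_nat m + 1) = (2 * of_int z :: rat)"
    using m by simp
  have "odd z" unfolding z_def by simp
  hence "z \<noteq> 0" by auto
  have v2_num: "v2 (2 * of_int z) = 1"
    using v2_mult[of 2 "of_int z"] v2_two_power[of 1] v2_of_int_odd[OF \<open>odd z\<close>] \<open>z \<noteq> 0\<close> by simp
  have "(of_nat m + 1 :: rat) = 2 ^ e"
    using assms(1) by (metis of_nat_1 of_nat_add of_nat_numeral of_nat_power)
  moreover have "(of_nat m - 1 :: rat) = of_nat (2 * (2 * w + 1))" using m by simp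
  ultimately have den: "(of_nat m + 1) * (of_nat m - 1) * of_nat K = (2 ^ e * of_nat (2 * (2 * w + 1)) * of_nat K :: rat)"
    by simp
  have "odd K" using K by presburger
  hence "K \<noteq> 0" by (cases K) simp_all
  have "v2 (2 ^ e * of_nat (2 * (2 * w + 1)) * of_nat K) = v2 (2 ^ e) + v2 (of_nat (2 * (2 * w + 1))) + v2 (of_nat K)"
    using \<open>K \<noteq> 0\<close> by (simp add: v2_mult del: of_nat_mult)
  hence v2_den: "v2 (2 ^ e * of_nat (2 * (2 * w + 1)) * of_nat K) = int e + 1"
    using v2_two_power[of e] v2_double[of "2 * w + 1"] v2_odd[of "2 * w + 1"] v2_odd[OF \<open>odd K\<close>] by simp
  have "c_seq (2 * m) = 2 * of_int z / (2 ^ e * of_nat (2 * (2 * w + 1)) * of_nat K)"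
    unfolding c_seq_closed_form[OF assms(2)] K_def[symmetric] num den ..
  thus "c_seq (2 * m) \<noteq> 0" "v2 (c_seq (2 * m)) = - int e"
    using v2_divide v2_num v2_den \<open>z \<noteq> 0\<close> \<open>K \<noteq> 0\<close> by (simp_all del: of_nat_mult)
qed

lemma c_seq_nonzero: "2 \<le> m \<Longrightarrow> c_seq (2 * m) \<noteq> 0"
  by (cases "\<exists>e. m + 1 = 2 ^ e") (use v2_c_seq_generic(1) v2_c_seq_mersenne(1) in auto)

lemma v2_c_seq_le_pred:
  assumes "2 \<le> m"
  shows "v2 (c_seq (2 * m)) \<le> - v2 (of_nat (m - 1)) - 1"
proof (cases "\<exists>e. m + 1 = 2 ^ e")
  case True
  then obtain e where e: "m + 1 = 2 ^ e" ..
  obtain w where "m = 4 * w + 3" by (rule mersenne_mod_fourE[OF e assms])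
  hence "m - 1 = 2 * (2 * w + 1)" by simp
  hence "v2 (of_nat (m - 1)) = 1" using v2_double[of "2 * w + 1"] v2_odd[of "2 * w + 1"] by simp
  thus ?thesis using v2_c_seq_mersenne(2)[OF e assms] mersenne_exponent_ge_two[OF e assms] by simp
next
  case False
  thus ?thesis using v2_c_seq_generic(2)[OF assms False] v2_fact_less[of m] assms by simp
qed

lemma v2_c_seq_le_fact:
  assumes "2 \<le> m"
  shows "v2 (c_seq (2 * m)) \<le> v2 (fact m) - int m"
proof (cases "\<exists>e. m + 1 = 2 ^ e")
  case True
  then obtain e where e: "m + 1 = 2 ^ e" ..
  thus ?thesis using v2_c_seq_mersenne(2)[OF e assms] v2_fact_mersenne[OF e] by simp
next
  case False
  thus ?thesis using v2_c_seq_generic(2)[OF assms False] v2_of_nat_nonneg[of "m - 1"] by simp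
qed

lemma v2_c_seq_le_binomial_sum:
  assumes "2 \<le> m" "odd j" "j \<le> m - 2"
  shows "v2 (c_seq (2 * m)) \<le> v2 (of_nat ((m choose j) + ((m - 2) choose j)))
           + v2 (fact j) + v2 (fact (2 * m - j - 2)) - v2 (fact (2 * m - 1)) - 1"
proof (cases "\<exists>e. m + 1 = 2 ^ e")
  case True
  then obtain e where e: "m + 1 = 2 ^ e" ..
  obtain w where "m = 4 * w + 3" by (rule mersenne_mod_fourE[OF e assms(1)])
  hence "odd m" by simp
  hence "v2 (fact (2 * m - 1)) = int m + v2 (fact m) - 1"
    using v2_fact_double_pred[of m] v2_odd[of m] assms(1) by simp
  thus ?thesis
    using v2_c_seq_mersenne(2)[OF e assms(1)] v2_fact_mersenne[OF e] v2_binomial_sum_mersenne[OF e assms]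
    by linarith
next
  case False
  have "j \<le> m" "m + (m - 2) - j = 2 * m - j - 2" using assms by simp_all
  hence "v2 (fact m) + v2 (fact (m - 2)) - v2 (fact j) - v2 (fact (2 * m - j - 2))
           \<le> v2 (of_nat ((m choose j) + ((m - 2) choose j)))"
    using v2_binomial_sum_ge[of j m "m - 2"] assms(3) by simp
  moreover have "v2 (fact (2 * m - 1)) = int m + v2 (fact m) - 1 - v2 (of_nat m)"
    using assms(1) by (intro v2_fact_double_pred) simp
  ultimately show ?thesis
    using v2_c_seq_generic(2)[OF assms(1) False] v2_fact_diff_two[OF assms(1)] by linarith
qed

lemma nu_d_ratio_ge_one:
  assumes "2 \<le> m"
  shows "1 \<le> nu 2 (d_seq (2 * m - 2) / (2 * c_seq (2 * m) * d_seq (2 * m)))"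
proof -
  obtain n where n: "m = Suc n" "0 < n" using assms by (cases m) auto
  have nonzero: "c_seq (2 * m) \<noteq> 0" "d_seq (2 * m - 2) \<noteq> 0" "d_seq (2 * m) \<noteq> 0"
    using c_seq_nonzero[OF assms] v2_d_seq by blast+
  hence "v2 (d_seq (2 * m - 2) / (2 * c_seq (2 * m) * d_seq (2 * m)))
           = v2 (d_seq (2 * m - 2)) - (1 + v2 (c_seq (2 * m)) + v2 (d_seq (2 * m)))"
    using v2_two_power[of 1] by (simp add: v2_divide v2_mult)
  moreover have "v2 (d_seq (2 * m - 2)) = v2 (fact (2 * n - 1)) - int (2 * n + 1)"
    using v2_d_seq(2)[of "2 * n"] n by simp
  moreover have "v2 (d_seq (2 * m)) = v2 (fact (2 * n + 1)) - int (2 * n + 3)"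
    using v2_d_seq(2)[of "2 * m"] n by simp
  moreover have "v2 (fact (2 * n + 1)) = v2 (fact (2 * n - 1)) + v2 (of_nat (2 * n)) + v2 (of_nat (2 * n + 1))"
    using v2_fact_Suc[of "2 * n"] v2_fact_pred[of "2 * n"] n by simp
  moreover have "v2 (of_nat (2 * n + 1)) = 0" by (intro v2_odd) simp
  moreover have "v2 (of_nat (2 * n)) = 1 + v2 (of_nat (m - 1))" using v2_double[of n] n by simp
  ultimately have "1 \<le> v2 (d_seq (2 * m - 2) / (2 * c_seq (2 * m) * d_seq (2 * m)))"
    using v2_c_seq_le_pred[OF assms] by linarith
  thus ?thesis using nu_ge_of_padic_val_ge[of _ 1] nonzero by (simp add: one_ereal_def)
qed

lemma nu_central_ratio_nonneg:
  assumes "2 \<le> m"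
  shows "0 \<le> nu 2 (of_nat (2 * m) * d_seq m ^ 2 / (2 * c_seq (2 * m) * d_seq (2 * m)))"
proof -
  have nonzero: "c_seq (2 * m) \<noteq> 0" "d_seq m \<noteq> 0" "d_seq (2 * m) \<noteq> 0" "(of_nat (2 * m) :: rat) \<noteq> 0"
    using c_seq_nonzero[OF assms] v2_d_seq assms by auto
  hence "v2 (of_nat (2 * m) * d_seq m ^ 2 / (2 * c_seq (2 * m) * d_seq (2 * m)))
           = v2 (of_nat (2 * m)) + 2 * v2 (d_seq m) - (1 + v2 (c_seq (2 * m)) + v2 (d_seq (2 * m)))"
    using v2_two_power[of 1] by (simp add: v2_divide v2_mult v2_power)
  moreover have "v2 (of_nat (2 * m)) = 1 + v2 (of_nat m)" using assms by (intro v2_double) simp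
  moreover have "v2 (fact (2 * m - 1)) = int m + v2 (fact m) - 1 - v2 (of_nat m)"
    using assms by (intro v2_fact_double_pred) simp
  moreover have "v2 (fact m) = v2 (fact (m - 1)) + v2 (of_nat m)"
    using assms by (intro v2_fact_pred) simp
  ultimately have "0 \<le> v2 (of_nat (2 * m) * d_seq m ^ 2 / (2 * c_seq (2 * m) * d_seq (2 * m)))"
    using v2_d_seq(2)[of m] v2_d_seq(2)[of "2 * m"] v2_c_seq_le_fact[OF assms] by linarith
  thus ?thesis using nu_ge_of_padic_val_ge[of _ 0] nonzero by (simp add: zero_ereal_def)
qed

lemma nu_binomial_ratio_nonneg:
  assumes "2 \<le> m" "odd j" "j \<le> m - 2"
  shows "0 \<le> nu 2 ((of_nat (m choose j) + of_nat ((m - 2) choose j)) * d_seq (j + 1) * d_seq (2 * m - j - 1)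
                    / (c_seq (2 * m) * d_seq (2 * m)))"
proof -
  define S where "S = (m choose j) + ((m - 2) choose j)"
  have sum: "of_nat (m choose j) + of_nat ((m - 2) choose j) = (of_nat S :: rat)"
    unfolding S_def by simp
  have "S \<noteq> 0" unfolding S_def using assms(3) by simp
  hence nonzero: "c_seq (2 * m) \<noteq> 0" "d_seq (j + 1) \<noteq> 0" "d_seq (2 * m - j - 1) \<noteq> 0"
      "d_seq (2 * m) \<noteq> 0" "(of_nat S :: rat) \<noteq> 0"
    using c_seq_nonzero[OF assms(1)] v2_d_seq(1) by simp_all
  hence "v2 (of_nat S * d_seq (j + 1) * d_seq (2 * m - j - 1) / (c_seq (2 * m) * d_seq (2 * m)))
           = v2 (of_nat S) + v2 (d_seq (j + 1)) + v2 (d_seq (2 * m - j - 1))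
             - (v2 (c_seq (2 * m)) + v2 (d_seq (2 * m)))"
    by (simp add: v2_divide v2_mult)
  moreover have "v2 (d_seq (2 * m - j - 1)) = v2 (fact (2 * m - j - 2)) - (2 * int m - int j)"
    using v2_d_seq(2)[of "2 * m - j - 1"] assms by (simp add: of_nat_diff)
  moreover have "v2 (d_seq (j + 1)) = v2 (fact j) - int (j + 2)"
    using v2_d_seq(2)[of "j + 1"] by simp
  ultimately have "0 \<le> v2 (of_nat S * d_seq (j + 1) * d_seq (2 * m - j - 1) / (c_seq (2 * m) * d_seq (2 * m)))"
    using v2_d_seq(2)[of "2 * m"] v2_c_seq_le_binomial_sum[OF assms]
    unfolding S_def by linarith
  thus ?thesis using nu_ge_of_padic_val_ge[of _ 0] nonzero unfolding sum by (simp add: zero_ereal_def)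
qed

theorem lemma3p2:
  fixes k :: nat
  assumes "even k" and "k \<ge> 4"
  shows "nu 2 (d_seq (k - 2) / (2 * c_seq k * d_seq k)) \<ge> 1
       \<and> nu 2 (of_nat k * (d_seq (k div 2))^2 / (2 * c_seq k * d_seq k)) \<ge> 0
       \<and> (\<forall>j::nat. odd j \<and> 0 < j \<and> j \<le> k div 2 - 2 \<longrightarrow>
            nu 2 ((of_nat (k div 2 choose j) + of_nat ((k div 2 - 2) choose j))
                  * d_seq (j + 1) * d_seq (k - j - 1) / (c_seq k * d_seq k)) \<ge> 0)"
proof -
  obtain m where k: "k = 2 * m" using assms(1) by blast
  have "2 \<le> m" "k div 2 = m" using assms(2) k by auto
  thus ?thesis
    unfolding \<open>k div 2 = m\<close> unfolding k
    using nu_d_ratio_ge_one nu_central_ratio_nonneg nu_binomial_ratio_nonneg by blast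
qed

end
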